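(* Let $\lambda,d\ge0$ and let $\mu\ge1$ be an integer. Let $u\in\Gamma^*$ be a $\mu$-locally $(\lambda,d)$-quasi-geodesic word in $G$. Then there is a word $v\in\Gamma^*$ of length less than $|\Gamma|^\mu$ such that for all $x,y\in\Gamma^*$ the word $xuy$ is $\mu$-locally $(\lambda,d)$-quasi-geodesic if and only if $xvy$ is $\mu$-locally $(\lambda,d)$-quasi-geodesic. Moreover, if $u\ne v$ then $|v|\ge\mu-1$.
   Context: $G$ is a torsion-free non-elementary $\delta$-hyperbolic group generated by a finite set $\Sigma\subseteq G\setminus\{1\}$; $\Gamma=\Sigma\cup\bar\Sigma$ where $\bar\Sigma=\Sigma^{-1}$ is regarded as a disjoint copy of $\Sigma$, and $\pi:\Gamma^*\to G$ is the canonical morphism. For $w\in\Gamma^*$, $|w|$ is its length and $|w|_G$ is the length of a shortest word $u$ with $\pi(u)=\pi(w)$. A word $w$ is $(\lambda,d)$-quasi-geodesic if every factor $u$ of $w$ satisfies $|u|\le\lambda|u|_G+d$; it is $\mu$-locally $(\lambda,d)$-quasi-geodesic if every factor of $w$ of length at most $\mu$ is $(\lambda,d)$-quasi-geodesic. *)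

theory Defs
  imports "HOL-Algebra.Algebra"
begin

text \<open>Alphabet Gamma = Sigma disjoint-union Sigma-bar, encoded as Sigma <+> Sigma:
  Inl s stands for s, Inr s stands for the formal inverse letter of s.\<close>

definition alphabet :: "'a set \<Rightarrow> ('a + 'a) set" where
  "alphabet S = S <+> S"

fun letter_val :: "('a, 'b) monoid_scheme \<Rightarrow> ('a + 'a) \<Rightarrow> 'a" where
  "letter_val G (Inl s) = s"
| "letter_val G (Inr s) = inv\<^bsub>G\<^esub> s"

definition word_eval :: "('a, 'b) monoid_scheme \<Rightarrow> ('a + 'a) list \<Rightarrow> 'a" where
  "word_eval G w = foldr (\<lambda>c acc. letter_val G c \<otimes>\<^bsub>G\<^esub> acc) w \<one>\<^bsub>G\<^esub>"

definition elem_len :: "('a, 'b) monoid_scheme \<Rightarrow> 'a set \<Rightarrow> 'a \<Rightarrow> nat" where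
  "elem_len G S g = (LEAST n. \<exists>u \<in> lists (alphabet S). length u = n \<and> word_eval G u = g)"

definition geo_len :: "('a, 'b) monoid_scheme \<Rightarrow> 'a set \<Rightarrow> ('a + 'a) list \<Rightarrow> nat" where
  "geo_len G S w = elem_len G S (word_eval G w)"

definition is_factor :: "'c list \<Rightarrow> 'c list \<Rightarrow> bool" where
  "is_factor f w \<longleftrightarrow> (\<exists>p s. w = p @ f @ s)"

definition quasi_geodesic ::
  "('a, 'b) monoid_scheme \<Rightarrow> 'a set \<Rightarrow> real \<Rightarrow> real \<Rightarrow> ('a + 'a) list \<Rightarrow> bool" where
  "quasi_geodesic G S lam d w \<longleftrightarrow>
     (\<forall>f. is_factor f w \<longrightarrow> real (length f) \<le> lam * real (geo_len G S f) + d)"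

definition locally_quasi_geodesic ::
  "('a, 'b) monoid_scheme \<Rightarrow> 'a set \<Rightarrow> nat \<Rightarrow> real \<Rightarrow> real \<Rightarrow> ('a + 'a) list \<Rightarrow> bool" where
  "locally_quasi_geodesic G S mu lam d w \<longleftrightarrow>
     (\<forall>f. is_factor f w \<and> length f \<le> mu \<longrightarrow> quasi_geodesic G S lam d f)"

definition word_dist :: "('a, 'b) monoid_scheme \<Rightarrow> 'a set \<Rightarrow> 'a \<Rightarrow> 'a \<Rightarrow> real" where
  "word_dist G S g h = real (elem_len G S (inv\<^bsub>G\<^esub> g \<otimes>\<^bsub>G\<^esub> h))"

definition gromov_product ::
  "('a, 'b) monoid_scheme \<Rightarrow> 'a set \<Rightarrow> 'a \<Rightarrow> 'a \<Rightarrow> 'a \<Rightarrow> real" where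
  "gromov_product G S w x y =
     (word_dist G S w x + word_dist G S w y - word_dist G S x y) / 2"

definition hyperbolic_wrt :: "('a, 'b) monoid_scheme \<Rightarrow> 'a set \<Rightarrow> real \<Rightarrow> bool" where
  "hyperbolic_wrt G S \<delta> \<longleftrightarrow> \<delta> \<ge> 0 \<and>
     (\<forall>w\<in>carrier G. \<forall>x\<in>carrier G. \<forall>y\<in>carrier G. \<forall>z\<in>carrier G.
        gromov_product G S w x y \<ge>
          min (gromov_product G S w x z) (gromov_product G S w y z) - \<delta>)"

definition torsion_free :: "('a, 'b) monoid_scheme \<Rightarrow> bool" where
  "torsion_free G \<longleftrightarrow>
     (\<forall>g\<in>carrier G. g \<noteq> \<one>\<^bsub>G\<^esub> \<longrightarrow> (\<forall>n::nat. n > 0 \<longrightarrow> g [^]\<^bsub>G\<^esub> n \<noteq> \<one>\<^bsub>G\<^esub>))"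

text \<open>Virtually cyclic: has a cyclic subgroup of finite index (includes finite groups).
  A hyperbolic group is elementary iff it is virtually cyclic.\<close>
definition virtually_cyclic :: "('a, 'b) monoid_scheme \<Rightarrow> bool" where
  "virtually_cyclic G \<longleftrightarrow>
     (\<exists>g\<in>carrier G. finite (rcosets\<^bsub>G\<^esub> (generate G {g})))"

end

theory Submission
  imports Defs "HOL-Library.Sublist"
begin

text \<open>Being \<open>\<mu>\<close>-locally quasi-geodesic is a property of the factors of length at most \<open>\<mu>\<close>,
  and when \<open>|w| = \<mu> - 1\<close> every such factor of \<open>a w b\<close> lies inside \<open>a w\<close> or inside \<open>w b\<close>.
  Hence if a window \<open>w\<close> of length \<open>\<mu> - 1\<close> occurs twice in \<open>u\<close>, cutting out the loop between
  the two occurrences does not change for which \<open>x, y\<close> the word \<open>x u y\<close> is locally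
  quasi-geodesic. A word of length at least \<open>|\<Gamma>|\<^bsup>\<mu> - 1\<^esup> + \<mu> - 1\<close> has more windows than there are
  words of length \<open>\<mu> - 1\<close>, so it contains such a loop; cutting loops until the word is short
  yields \<open>v\<close>. The argument is purely combinatorial: of the hypotheses on \<open>G\<close> only
  non-elementarity is used, to guarantee \<open>\<Sigma> \<noteq> {}\<close> and hence \<open>|\<Gamma>|\<^bsup>\<mu> - 1\<^esup> + \<mu> - 1 \<le> |\<Gamma>|\<^bsup>\<mu>\<^esup>\<close>.\<close>

definition locally_satisfies :: "('c list \<Rightarrow> bool) \<Rightarrow> nat \<Rightarrow> 'c list \<Rightarrow> bool" where
  "locally_satisfies P mu w \<longleftrightarrow> (\<forall>f. sublist f w \<and> length f \<le> mu \<longrightarrow> P f)"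

lemma is_factor_eq_sublist: "is_factor = sublist"
  by (simp add: fun_eq_iff is_factor_def sublist_def)

lemma locally_quasi_geodesic_eq_locally_satisfies:
  "locally_quasi_geodesic G S mu lam d = locally_satisfies (quasi_geodesic G S lam d) mu"
  by (simp add: fun_eq_iff locally_quasi_geodesic_def locally_satisfies_def is_factor_eq_sublist)

lemma locally_satisfies_sublist:
  "locally_satisfies P mu w \<Longrightarrow> sublist f w \<Longrightarrow> locally_satisfies P mu f"
  unfolding locally_satisfies_def using sublist_order.order.trans by blast

lemma sublist_short_append_middle:
  assumes "sublist f (a @ w @ b)" "length f \<le> length w + 1"
  shows "sublist f (a @ w) \<or> sublist f (w @ b)"
proof -
  obtain p s where fs: "a @ w @ b = p @ f @ s"
    using assms(1) unfolding sublist_def by blast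
  show ?thesis
  proof (cases "length p + length f \<le> length a + length w")
    case True
    have "a @ w = take (length a + length w) (p @ f @ s)"
      by (metis fs append.assoc append_eq_conv_conj length_append)
    also have "\<dots> = p @ f @ take (length a + length w - (length p + length f)) s"
      using True by simp
    finally show ?thesis by auto
  next
    case False
    then have "length a \<le> length p"
      using assms(2) by linarith
    have "w @ b = drop (length a) (p @ f @ s)"
      by (metis fs append_eq_conv_conj)
    also have "\<dots> = drop (length a) p @ f @ s"
      using \<open>length a \<le> length p\<close> by simp
    finally show ?thesis by auto
  qed
qed

lemma locally_satisfies_append_iff:
  assumes "mu \<le> length w + 1"
  shows "locally_satisfies P mu (a @ w @ b) \<longleftrightarrow>
         locally_satisfies P mu (a @ w) \<and> locally_satisfies P mu (w @ b)"
proof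
  assume "locally_satisfies P mu (a @ w @ b)"
  then show "locally_satisfies P mu (a @ w) \<and> locally_satisfies P mu (w @ b)"
    by (metis append.assoc locally_satisfies_sublist sublist_append_leftI sublist_append_rightI)
next
  assume "locally_satisfies P mu (a @ w) \<and> locally_satisfies P mu (w @ b)"
  then show "locally_satisfies P mu (a @ w @ b)"
    using sublist_short_append_middle[of _ a w b] assms
    unfolding locally_satisfies_def by fastforce
qed

text \<open>The loop \<open>c\<close> leads from an occurrence of the window \<open>w\<close> back to an occurrence of \<open>w\<close>;
  the two occurrences may overlap, which is why \<open>c w = w e\<close> replaces the naive \<open>c = w s\<close>.\<close>

lemma locally_satisfies_cut_loop:
  assumes "mu \<le> length w + 1" and loop: "c @ w = w @ e" "locally_satisfies P mu (c @ w)"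
  shows "locally_satisfies P mu (a @ c @ w @ b) \<longleftrightarrow> locally_satisfies P mu (a @ w @ b)"
proof -
  have split_loop: "a @ c @ w @ b = a @ w @ (e @ b)" "c @ w @ b = w @ e @ b"
    using loop(1) by (metis append.assoc)+
  have "locally_satisfies P mu (a @ c @ w @ b) \<longleftrightarrow>
        locally_satisfies P mu (a @ w) \<and> locally_satisfies P mu (c @ w @ b)"
    unfolding split_loop using locally_satisfies_append_iff[OF assms(1)] by blast
  also have "\<dots> \<longleftrightarrow> locally_satisfies P mu (a @ w) \<and> locally_satisfies P mu (w @ b)"
    using locally_satisfies_append_iff[OF assms(1), of P c b] loop(2) by blast
  also have "\<dots> \<longleftrightarrow> locally_satisfies P mu (a @ w @ b)"
    using locally_satisfies_append_iff[OF assms(1)] by blast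
  finally show ?thesis .
qed

lemma window_repeats:
  fixes u :: "'c list"
  assumes "finite A" "u \<in> lists A" "card A ^ m + m \<le> length u"
  shows "\<exists>i j. i < j \<and> j + m \<le> length u \<and> take m (drop i u) = take m (drop j u)"
proof -
  define window where "window i = take m (drop i u)" for i
  let ?P = "{..length u - m}"
  have "window ` ?P \<subseteq> {w. set w \<subseteq> A \<and> length w = m}"
  proof
    fix w assume "w \<in> window ` ?P"
    then obtain i where "i \<le> length u - m" "w = window i"
      by auto
    moreover have "set (window i) \<subseteq> A"
      using assms(2) set_take_subset set_drop_subset unfolding window_def
      by (metis in_lists_conv_set subset_code(1) subset_trans)
    ultimately show "w \<in> {w. set w \<subseteq> A \<and> length w = m}"
      using assms(3) by (simp add: window_def)
  qed
  then have "card (window ` ?P) \<le> card A ^ m"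
    using card_mono[OF finite_lists_length_eq[OF assms(1)]] card_lists_length_eq[OF assms(1)]
    by simp
  also have "\<dots> < card ?P"
    using assms(3) by simp
  finally have "\<not> inj_on window ?P"
    by (rule pigeonhole)
  then obtain i j where "i \<in> ?P" "j \<in> ?P" "i \<noteq> j" "window i = window j"
    unfolding inj_on_def by blast
  then obtain i j where "i < j" "j \<le> length u - m" "window i = window j"
    by (metis atMost_iff linorder_neqE_nat)
  with assms(3) show ?thesis
    unfolding window_def by (intro exI[of _ i] exI[of _ j]) auto
qed

lemma long_word_has_loop:
  fixes u :: "'c list"
  assumes "finite A" "u \<in> lists A" "card A ^ m + m \<le> length u"
  shows "\<exists>p c w t e. u = p @ c @ w @ t \<and> c @ w = w @ e \<and> c \<noteq> [] \<and> length w = m"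
proof -
  obtain i j where ij: "i < j" "j + m \<le> length u" "take m (drop i u) = take m (drop j u)"
    using window_repeats[OF assms] by blast
  define c where "c = take (j - i) (drop i u)"
  define w where "w = take m (drop j u)"
  have "c @ w = take (j - i + m) (drop i u)"
    unfolding take_add c_def w_def drop_drop using ij by simp
  also have "\<dots> = w @ take (j - i) (drop (i + m) u)"
    using ij(3) by (simp add: take_add[of m] w_def add.commute)
  finally have "c @ w = w @ take (j - i) (drop (i + m) u)" .
  moreover have "u = take i u @ c @ w @ drop (j + m) u"
  proof -
    have "drop i u = c @ drop j u"
      using ij(1) unfolding c_def by (metis append_take_drop_id drop_drop le_add_diff_inverse2 less_imp_le)
    moreover have "drop j u = w @ drop (j + m) u"
      unfolding w_def by (metis append_take_drop_id drop_drop add.commute)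
    ultimately show ?thesis
      by (metis append_take_drop_id)
  qed
  moreover have "c \<noteq> []" "length w = m"
    using ij by (auto simp: c_def w_def)
  ultimately show ?thesis by blast
qed

lemma locally_satisfies_short_representative:
  fixes u :: "'c list"
  assumes "finite A" "u \<in> lists A" "locally_satisfies P mu u"
  shows "\<exists>v \<in> lists A. length v < card A ^ (mu - 1) + (mu - 1) \<and>
           (\<forall>x y. locally_satisfies P mu (x @ u @ y) \<longleftrightarrow> locally_satisfies P mu (x @ v @ y)) \<and>
           (u \<noteq> v \<longrightarrow> mu - 1 \<le> length v)"
  using assms(2,3)
proof (induction "length u" arbitrary: u rule: less_induct)
  case less
  show ?case
  proof (cases "length u < card A ^ (mu - 1) + (mu - 1)")
    case True
    with less.prems show ?thesis by blast
  next
    case False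
    then obtain p c w t e where
      u: "u = p @ c @ w @ t" and loop: "c @ w = w @ e" "c \<noteq> []" "length w = mu - 1"
      using long_word_has_loop[OF assms(1) less.prems(1)] by (meson not_less)
    define u' where "u' = p @ w @ t"
    have "locally_satisfies P mu (c @ w)"
      using less.prems(2) u by (metis append.assoc locally_satisfies_sublist sublist_appendI)
    then have cut: "locally_satisfies P mu (x @ u @ y) \<longleftrightarrow> locally_satisfies P mu (x @ u' @ y)"
      for x y
      using locally_satisfies_cut_loop[of mu w c e P "x @ p" "t @ y"] loop(1,3)
      by (simp add: u u'_def)
    have "u' \<in> lists A" "locally_satisfies P mu u'"
      using less.prems cut[of "[]" "[]"] by (auto simp: u u'_def)
    moreover have "length u' < length u" "mu - 1 \<le> length u'"
      using loop by (auto simp: u u'_def)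
    ultimately obtain v where "v \<in> lists A" "length v < card A ^ (mu - 1) + (mu - 1)"
      "\<forall>x y. locally_satisfies P mu (x @ u' @ y) \<longleftrightarrow> locally_satisfies P mu (x @ v @ y)"
      "u' \<noteq> v \<longrightarrow> mu - 1 \<le> length v"
      using less.hyps by blast
    with cut \<open>mu - 1 \<le> length u'\<close> show ?thesis
      by (intro bexI[of _ v]) auto
  qed
qed

lemma power_plus_le_power_Suc:
  fixes k m :: nat
  assumes "2 \<le> k"
  shows "k ^ m + m \<le> k ^ Suc m"
proof -
  have "m < 2 ^ m"
    by (rule less_exp)
  also have "\<dots> \<le> k ^ m"
    using assms by (simp add: power_mono)
  finally have "m \<le> k ^ m"
    by simp
  moreover have "2 * k ^ m \<le> k * k ^ m"
    using assms by (rule mult_right_mono) simp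
  ultimately show ?thesis
    unfolding power_Suc by linarith
qed

lemma trivial_group_virtually_cyclic:
  assumes "carrier G = {\<one>\<^bsub>G\<^esub>}"
  shows "virtually_cyclic G"
  unfolding virtually_cyclic_def RCOSETS_def assms by simp

lemma generators_nonempty_if_not_virtually_cyclic:
  assumes "group G" "generate G S = carrier G" "\<not> virtually_cyclic G"
  shows "S \<noteq> {}"
proof
  assume "S = {}"
  then have "carrier G = {\<one>\<^bsub>G\<^esub>}"
    using assms(2) group.generate_empty[OF assms(1)] by simp
  with assms(3) show False
    using trivial_group_virtually_cyclic by blast
qed

lemma card_alphabet: "finite S \<Longrightarrow> card (alphabet S) = 2 * card S"
  by (simp add: alphabet_def card_Plus)

theorem mainTheorem6:
  fixes G :: "('a, 'b) monoid_scheme" and S :: "'a set"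
    and \<delta> lam d :: real and mu :: nat and u :: "('a + 'a) list"
  assumes "group G"
    and "finite S" and "S \<subseteq> carrier G - {\<one>\<^bsub>G\<^esub>}" and "generate G S = carrier G"
    and "hyperbolic_wrt G S \<delta>"
    and "torsion_free G" and "\<not> virtually_cyclic G"
    and "lam \<ge> 0" and "d \<ge> 0" and "mu \<ge> 1"
    and "u \<in> lists (alphabet S)"
    and "locally_quasi_geodesic G S mu lam d u"
  shows "\<exists>v \<in> lists (alphabet S).
           length v < card (alphabet S) ^ mu \<and>
           (\<forall>x \<in> lists (alphabet S). \<forall>y \<in> lists (alphabet S).
              locally_quasi_geodesic G S mu lam d (x @ u @ y) \<longleftrightarrow>
              locally_quasi_geodesic G S mu lam d (x @ v @ y)) \<and>
           (u \<noteq> v \<longrightarrow> length v \<ge> mu - 1)"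
proof -
  have "S \<noteq> {}"
    using generators_nonempty_if_not_virtually_cyclic assms(1,4,7) by blast
  then have "2 \<le> card (alphabet S)"
    using assms(2) card_alphabet[OF assms(2)] by (simp add: card_gt_0_iff Suc_le_eq)
  then have bound: "card (alphabet S) ^ (mu - 1) + (mu - 1) \<le> card (alphabet S) ^ mu"
    using power_plus_le_power_Suc[of "card (alphabet S)" "mu - 1"] assms(10) by simp
  have "finite (alphabet S)"
    using assms(2) by (simp add: alphabet_def)
  from locally_satisfies_short_representative[OF this assms(11)]
  obtain v where v: "v \<in> lists (alphabet S)"
    "length v < card (alphabet S) ^ (mu - 1) + (mu - 1)"
    "\<forall>x y. locally_satisfies (quasi_geodesic G S lam d) mu (x @ u @ y) \<longleftrightarrow>
           locally_satisfies (quasi_geodesic G S lam d) mu (x @ v @ y)"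
    "u \<noteq> v \<longrightarrow> mu - 1 \<le> length v"
    using assms(12) unfolding locally_quasi_geodesic_eq_locally_satisfies by blast
  have "length v < card (alphabet S) ^ mu"
    using v(2) bound by linarith
  with v show ?thesis
    unfolding locally_quasi_geodesic_eq_locally_satisfies by blast
qed

end
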